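(* Let $\mathcal{U}=\{1,\dots,N\}$ be a set of domains, data $(\mathbf{x},u)\sim p(\mathbf{x},u)$ with $p(u=i)=1/N$ for all $i$, and let $E$ be an encoder with $\mathbf{e}=E(\mathbf{x})$. Let $w_{ij}>0$ ($i\ne j$) be weights, and for each ordered pair $i\ne j$ let $D_{ij}:\mathcal{Z}\to(0,1)$ be a pairwise discriminator. Define the value $$V(E,\{D_{ij}\})=\frac12\sum_{i\neq j} w_{ij}\Big(p(u=i)\,\mathbb{E}_{\mathbf{e}\mid u=i}[\log D_{ij}(\mathbf{e})]+p(u=j)\,\mathbb{E}_{\mathbf{e}\mid u=j}[\log(1-D_{ij}(\mathbf{e}))]\Big),$$ which is the objective $\mathbb{E}[\sum_{j\ne i} w_{ij}\log D_{ij}(E(\mathbf{x}))]$ of the min-max game $\min_E\max_{\{D_{ij}\}} V$. Then for every encoder $E$, $$\max_{\{D_{ij}\}} V(E,\{D_{ij}\})\ \ge\ -\frac{\log 2}{N}\sum_{i\ne j} w_{ij},$$ and this lower bound is tight: equality (the optimum of the min-max game) is achieved when $p(\mathbf{e}\mid u=i)=p(\mathbf{e}\mid u=j)$ for all $i,j$, equivalently $p(\mathbf{e}\mid u=i)=p(\mathbf{e})$ for all $i$.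
   Context: $\mathcal{Z}$ denotes the encoding space and $p(\mathbf{e}\mid u=i)$ the distribution of encodings of data from domain $i$. The weights $w_{ij}$ are meant to reflect pairwise domain distances from a domain taxonomy (e.g. $w_{ij}\propto 1/\mathbf{A}_{ij}$ with $\mathbf{A}_{ij}$ the taxonomy distance between domains), but the result holds for arbitrary positive weights. *)

theory Defs
  imports "HOL-Probability.Probability"
begin

definition domain_pairs :: "nat \<Rightarrow> (nat \<times> nat) set" where
  "domain_pairs N = {(i, j). i \<in> {1..N} \<and> j \<in> {1..N} \<and> i \<noteq> j}"

text \<open>Expectation of a (possibly non-integrable) function with values in (-inf,0],
  taken as an extended real: E[f] = - integral of (-f), which may be -infinity.\<close>
definition neg_expect :: "'z measure \<Rightarrow> ('z \<Rightarrow> real) \<Rightarrow> ereal" where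
  "neg_expect P f = - enn2ereal (\<integral>\<^sup>+ e. ennreal (- f e) \<partial>P)"

definition admissible_discs :: "nat \<Rightarrow> 'z measure \<Rightarrow> (nat \<Rightarrow> nat \<Rightarrow> 'z \<Rightarrow> real) \<Rightarrow> bool" where
  "admissible_discs N MZ D \<longleftrightarrow>
     (\<forall>(i, j) \<in> domain_pairs N. D i j \<in> borel_measurable MZ \<and>
        (\<forall>e \<in> space MZ. 0 < D i j e \<and> D i j e < 1))"

text \<open>The value V(E,{D_ij}), where P i = p(e | u = i) is the encoding distribution
  of domain i and p(u = i) = 1/N.\<close>
definition game_value ::
  "nat \<Rightarrow> (nat \<Rightarrow> nat \<Rightarrow> real) \<Rightarrow> (nat \<Rightarrow> 'z measure) \<Rightarrow> (nat \<Rightarrow> nat \<Rightarrow> 'z \<Rightarrow> real) \<Rightarrow> ereal" where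
  "game_value N w P D =
     ereal (1/2) * (\<Sum>(i, j) \<in> domain_pairs N.
        ereal (w i j) * (ereal (1 / real N) * neg_expect (P i) (\<lambda>e. ln (D i j e))
                       + ereal (1 / real N) * neg_expect (P j) (\<lambda>e. ln (1 - D i j e))))"

text \<open>max over discriminators (as a supremum; attainment is stated separately).\<close>
definition max_value ::
  "nat \<Rightarrow> (nat \<Rightarrow> nat \<Rightarrow> real) \<Rightarrow> 'z measure \<Rightarrow> (nat \<Rightarrow> 'z measure) \<Rightarrow> ereal" where
  "max_value N w MZ P = (SUP D \<in> {D. admissible_discs N MZ D}. game_value N w P D)"

end

theory Submission
  imports Defs
begin

text \<open>Pointwise, \<open>d (1 - d) \<le> 1/4\<close>, so \<open>ln d + ln (1 - d) \<le> -2 ln 2\<close> for every value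
  \<open>d \<in> (0,1)\<close> of a discriminator. When all domains have the same encoding distribution,
  both expectations in the term of a pair \<open>(i, j)\<close> are taken under one measure, so that
  term is at most \<open>-2 ln 2 w\<^sub>i\<^sub>j / N\<close>. The constant discriminators \<open>D\<^sub>i\<^sub>j = 1/2\<close> attain
  this value for every encoder, which gives the lower bound in general and equality
  when the distributions agree.\<close>

definition equilibrium_value :: "nat \<Rightarrow> (nat \<Rightarrow> nat \<Rightarrow> real) \<Rightarrow> real" where
  "equilibrium_value N w = - (ln 2 / real N) * (\<Sum>(i, j) \<in> domain_pairs N. w i j)"

lemma ln_add_ln_one_minus_le:
  fixes d :: real
  assumes "0 < d" "d < 1"
  shows "ln d + ln (1 - d) \<le> - 2 * ln 2"
proof -
  have "d * (1 - d) \<le> 1 / 4"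
    using zero_le_power2[of "d - 1/2"] by (simp add: power2_eq_square algebra_simps)
  then have "ln (d * (1 - d)) \<le> ln (1 / 4)"
    using assms by (subst ln_le_cancel_iff) auto
  moreover have "ln (d * (1 - d)) = ln d + ln (1 - d)"
    using assms by (simp add: ln_mult)
  moreover have "ln (1 / 4 :: real) = - 2 * ln 2"
    using ln_mult[of 2 2] by (simp add: ln_div)
  ultimately show ?thesis by linarith
qed

lemma neg_expect_nonpos: "neg_expect P f \<le> 0"
  unfolding neg_expect_def by simp

lemma neg_expect_const:
  assumes "prob_space P" "c \<le> 0"
  shows "neg_expect P (\<lambda>_. c) = ereal c"
  using assms prob_space.emeasure_space_1[OF assms(1)] unfolding neg_expect_def by simp

lemma neg_expect_ln_add_ln_one_minus_le:
  assumes P: "prob_space P" and d_meas: "d \<in> borel_measurable P"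
    and d_range: "\<And>e. e \<in> space P \<Longrightarrow> 0 < d e \<and> d e < 1"
  shows "neg_expect P (\<lambda>e. ln (d e)) + neg_expect P (\<lambda>e. ln (1 - d e)) \<le> ereal (- 2 * ln 2)"
proof -
  let ?f = "\<lambda>e. ennreal (- ln (d e))" and ?g = "\<lambda>e. ennreal (- ln (1 - d e))"
  have f_meas: "?f \<in> borel_measurable P"
    using d_meas by measurable
  have g_meas: "?g \<in> borel_measurable P"
    using d_meas by measurable
  have "ennreal (2 * ln 2) = (\<integral>\<^sup>+ e. ennreal (2 * ln 2) \<partial>P)"
    using prob_space.emeasure_space_1[OF P] by simp
  also have "\<dots> \<le> (\<integral>\<^sup>+ e. ?f e + ?g e \<partial>P)"
  proof (rule nn_integral_mono)
    fix e assume "e \<in> space P"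
    then have d: "0 < d e" "d e < 1" using d_range by auto
    then have "?f e + ?g e = ennreal (- ln (d e) - ln (1 - d e))"
      by (simp add: ennreal_plus[symmetric])
    then show "ennreal (2 * ln 2) \<le> ?f e + ?g e"
      using ln_add_ln_one_minus_le[OF d] by (simp add: ennreal_leI)
  qed
  also have "\<dots> = integral\<^sup>N P ?f + integral\<^sup>N P ?g"
    by (rule nn_integral_add[OF f_meas g_meas])
  finally have "enn2ereal (ennreal (2 * ln 2))
      \<le> enn2ereal (integral\<^sup>N P ?f) + enn2ereal (integral\<^sup>N P ?g)"
    unfolding less_eq_ennreal.rep_eq plus_ennreal.rep_eq .
  then have "ereal (2 * ln 2) \<le> enn2ereal (integral\<^sup>N P ?f) + enn2ereal (integral\<^sup>N P ?g)"
    by simp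
  then show ?thesis unfolding neg_expect_def
    using enn2ereal_nonneg[of "integral\<^sup>N P ?f"] enn2ereal_nonneg[of "integral\<^sup>N P ?g"]
    by (cases "enn2ereal (integral\<^sup>N P ?f)"; cases "enn2ereal (integral\<^sup>N P ?g)") auto
qed

lemma ereal_scaled_add_le:
  fixes a b :: ereal and c n s :: real
  assumes "a + b \<le> ereal s" "a \<le> 0" "b \<le> 0" "0 \<le> c" "0 \<le> n"
  shows "ereal c * (ereal n * a + ereal n * b) \<le> ereal (c * (n * s))"
proof -
  have "ereal n * a + ereal n * b \<le> ereal (n * s)"
  proof (cases a; cases b)
    fix r t assume ab: "a = ereal r" "b = ereal t"
    then have "n * (r + t) \<le> n * s"
      using assms(1,5) by (intro mult_left_mono) auto
    then show ?thesis using ab by (simp add: algebra_simps)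
  qed (use assms in auto)
  then show ?thesis
    using ereal_mult_left_mono[of _ _ "ereal c"] assms(4) by fastforce
qed

lemma half_sum_pair_terms_eq_equilibrium_value:
  "ereal (1/2) * (\<Sum>(i, j) \<in> domain_pairs N. ereal (w i j * (1 / real N * (- 2 * ln 2))))
     = ereal (equilibrium_value N w)"
  unfolding equilibrium_value_def
  by (simp add: sum_distrib_left[symmetric] sum_distrib_right[symmetric] case_prod_beta
      algebra_simps)
    (simp only: sum_negf sum_divide_distrib[symmetric] sum_distrib_left[symmetric])

lemma game_value_const_half:
  assumes "\<And>i. i \<in> {1..N} \<Longrightarrow> prob_space (P i)"
  shows "game_value N w P (\<lambda>_ _ _. 1/2) = ereal (equilibrium_value N w)"
proof -
  have "neg_expect (P i) (\<lambda>_. ln (1/2)) = ereal (- ln 2)" if "i \<in> {1..N}" for i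
    using neg_expect_const[OF assms[OF that], of "ln (1/2)"] by (simp add: ln_div)
  then have "game_value N w P (\<lambda>_ _ _. 1/2)
      = ereal (1/2) * (\<Sum>(i, j) \<in> domain_pairs N. ereal (w i j * (1 / real N * (- 2 * ln 2))))"
    unfolding game_value_def
    by (intro arg_cong[where f = "(*) (ereal (1/2))"] sum.cong refl)
      (auto simp: domain_pairs_def algebra_simps)
  then show ?thesis
    by (simp only: half_sum_pair_terms_eq_equilibrium_value)
qed

lemma game_value_le_equilibrium_value:
  assumes w_pos: "\<And>i j. (i, j) \<in> domain_pairs N \<Longrightarrow> 0 < w i j"
    and P_prob: "\<And>i. i \<in> {1..N} \<Longrightarrow> prob_space (P i)"
    and P_sets: "\<And>i. i \<in> {1..N} \<Longrightarrow> sets (P i) = sets MZ"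
    and P_eq: "\<And>i j. i \<in> {1..N} \<Longrightarrow> j \<in> {1..N} \<Longrightarrow> P i = P j"
    and D: "admissible_discs N MZ D"
  shows "game_value N w P D \<le> ereal (equilibrium_value N w)"
proof -
  have "game_value N w P D
      \<le> ereal (1/2) * (\<Sum>(i, j) \<in> domain_pairs N. ereal (w i j * (1 / real N * (- 2 * ln 2))))"
    unfolding game_value_def
  proof (intro ereal_mult_left_mono sum_mono, clarify)
    fix i j assume ij: "(i, j) \<in> domain_pairs N"
    then have i: "i \<in> {1..N}" and P_ji: "P j = P i"
      using P_eq by (auto simp: domain_pairs_def)
    have D_ij: "D i j \<in> borel_measurable (P i)"
      "\<And>e. e \<in> space (P i) \<Longrightarrow> 0 < D i j e \<and> D i j e < 1"
      using D ij P_sets[OF i] sets_eq_imp_space_eq[OF P_sets[OF i]]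
      by (auto simp: admissible_discs_def cong: measurable_cong_sets)
    show "ereal (w i j) * (ereal (1 / real N) * neg_expect (P i) (\<lambda>e. ln (D i j e))
        + ereal (1 / real N) * neg_expect (P j) (\<lambda>e. ln (1 - D i j e)))
      \<le> ereal (w i j * (1 / real N * (- 2 * ln 2)))"
      unfolding P_ji
      by (rule ereal_scaled_add_le[OF neg_expect_ln_add_ln_one_minus_le[OF P_prob[OF i] D_ij]
          neg_expect_nonpos neg_expect_nonpos]) (use w_pos[OF ij] in simp_all)
  qed simp
  then show ?thesis
    by (simp only: half_sum_pair_terms_eq_equilibrium_value)
qed

theorem theorem4p3:
  fixes N :: nat
    and w :: "nat \<Rightarrow> nat \<Rightarrow> real"
    and MX :: "'x measure" and MZ :: "'z measure"
    and Q :: "nat \<Rightarrow> 'x measure"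
    and E :: "'x \<Rightarrow> 'z"
  assumes w_pos: "\<And>i j. (i, j) \<in> domain_pairs N \<Longrightarrow> 0 < w i j"
    and Q_prob: "\<And>i. i \<in> {1..N} \<Longrightarrow> prob_space (Q i)"
    and Q_sets: "\<And>i. i \<in> {1..N} \<Longrightarrow> sets (Q i) = sets MX"
    and E_meas: "E \<in> measurable MX MZ"
  shows "max_value N w MZ (\<lambda>i. distr (Q i) MZ E)
           \<ge> ereal (- (ln 2 / real N) * (\<Sum>(i, j) \<in> domain_pairs N. w i j))
     \<and> ((\<forall>i \<in> {1..N}. \<forall>j \<in> {1..N}. distr (Q i) MZ E = distr (Q j) MZ E) \<longrightarrow>
           max_value N w MZ (\<lambda>i. distr (Q i) MZ E)
             = ereal (- (ln 2 / real N) * (\<Sum>(i, j) \<in> domain_pairs N. w i j))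
           \<and> (\<exists>D. admissible_discs N MZ D \<and>
                  game_value N w (\<lambda>i. distr (Q i) MZ E) D
                    = ereal (- (ln 2 / real N) * (\<Sum>(i, j) \<in> domain_pairs N. w i j))))"
proof -
  define P where "P = (\<lambda>i. distr (Q i) MZ E)"
  have P_prob: "prob_space (P i)" if "i \<in> {1..N}" for i
    unfolding P_def using E_meas Q_prob[OF that] Q_sets[OF that]
    by (auto intro: prob_space.prob_space_distr cong: measurable_cong_sets)
  have half_adm: "admissible_discs N MZ (\<lambda>_ _ _. 1/2)"
    unfolding admissible_discs_def by auto
  have half_val: "game_value N w P (\<lambda>_ _ _. 1/2) = ereal (equilibrium_value N w)"
    using P_prob by (rule game_value_const_half)
  have lower: "ereal (equilibrium_value N w) \<le> max_value N w MZ P"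
    unfolding max_value_def using half_adm half_val by (auto intro!: SUP_upper2)
  have upper: "max_value N w MZ P \<le> ereal (equilibrium_value N w)"
    if "\<forall>i \<in> {1..N}. \<forall>j \<in> {1..N}. P i = P j"
    unfolding max_value_def
  proof (rule SUP_least, clarify)
    fix D assume "admissible_discs N MZ D"
    moreover have "sets (P i) = sets MZ" for i
      unfolding P_def by simp
    ultimately show "game_value N w P D \<le> ereal (equilibrium_value N w)"
      using that by (intro game_value_le_equilibrium_value[OF w_pos P_prob]) blast+
  qed
  have "ereal (equilibrium_value N w) \<le> max_value N w MZ P
    \<and> ((\<forall>i \<in> {1..N}. \<forall>j \<in> {1..N}. P i = P j) \<longrightarrow>
        max_value N w MZ P = ereal (equilibrium_value N w)
        \<and> (\<exists>D. admissible_discs N MZ D \<and> game_value N w P D = ereal (equilibrium_value N w)))"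
    using lower upper half_adm half_val antisym by metis
  then show ?thesis
    unfolding P_def equilibrium_value_def .
qed

end
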